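(* Let $\mathcal I$ be a nonempty index set, and for each $i\in\mathcal I$ let $\mu^i$ be a stationary policy and $S^i\subset X$ a set with $f(x,\mu^i(x))\in S^i$ for all $x\in S^i$. Define $\bar J_S:X\to[0,\infty]$ by $\bar J_S(x)=\inf_{i\in\mathcal I_x}J_{\mu^i}(x)$, where $\mathcal I_x=\{i\in\mathcal I: x\in S^i\}$ and $\inf\emptyset=\infty$ (so $\bar J_S<\infty$ only possibly on $S=\bigcup_{i\in\mathcal I}S^i$). Fix $\ell\ge1$ and let $\tilde J_S$ be the optimal value and $\tilde\mu$ the rollout policy of the $\ell$-step rollout problem with terminal cost $\bar J_S$. Then $$J_{\tilde\mu}(x)\le\tilde J_S(x)\le\bar J_S(x)\quad\text{for all }x\in X.$$
   Context: Deterministic infinite-horizon problem: arbitrary state space $X$ and control space $U$, dynamics $x_{k+1}=f(x_k,u_k)$ with $f:X\times U\to X$, nonempty control constraint sets $U(x)\subset U$, stage cost $g(x,u)\in[0,\infty]$ for $x\in X$, $u\in U(x)$. A stationary policy is a map $\mu:X\to U$ with $\mu(x)\in U(x)$; its cost is $J_\mu(x_0)=\sum_{k=0}^\infty g(x_k,\mu(x_k))$ with $x_{k+1}=f(x_k,\mu(x_k))$. Standing assumption: for every $J:X\to[0,\infty]$ and every $x\in X$, $\inf_{u\in U(x)}\{g(x,u)+J(f(x,u))\}$ is attained. Rollout with terminal cost $\bar J$ and lookahead $\ell$: $J_0=\bar J$, $J_{k+1}(x)=\min_{u\in U(x)}\{g(x,u)+J_k(f(x,u))\}$; the optimal value is $J_\ell(x)$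 (equal to the minimum of $\sum_{k=0}^{\ell-1}g(x_k,u_k)+\bar J(x_\ell)$ over $u_k\in U(x_k)$ with $x_0=x$, $x_{k+1}=f(x_k,u_k)$), and the rollout policy is $\tilde\mu(x)\in\arg\min_{u\in U(x)}\{g(x,u)+J_{\ell-1}(f(x,u))\}$ (the first control of a minimizing sequence). *)

theory Defs
  imports "HOL-Analysis.Analysis" "HOL-Library.Extended_Nonnegative_Real"
begin

definition is_policy :: "('x \<Rightarrow> 'u set) \<Rightarrow> ('x \<Rightarrow> 'u) \<Rightarrow> bool" where
  "is_policy U \<mu> \<longleftrightarrow> (\<forall>x. \<mu> x \<in> U x)"

definition traj :: "('x \<Rightarrow> 'u \<Rightarrow> 'x) \<Rightarrow> ('x \<Rightarrow> 'u) \<Rightarrow> 'x \<Rightarrow> nat \<Rightarrow> 'x" where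
  "traj f \<mu> x0 k = ((\<lambda>x. f x (\<mu> x)) ^^ k) x0"

definition Jpol :: "('x \<Rightarrow> 'u \<Rightarrow> 'x) \<Rightarrow> ('x \<Rightarrow> 'u \<Rightarrow> ennreal) \<Rightarrow> ('x \<Rightarrow> 'u) \<Rightarrow> 'x \<Rightarrow> ennreal" where
  "Jpol f g \<mu> x0 = (\<Sum>k. g (traj f \<mu> x0 k) (\<mu> (traj f \<mu> x0 k)))"

definition standing_assm :: "('x \<Rightarrow> 'u \<Rightarrow> 'x) \<Rightarrow> ('x \<Rightarrow> 'u set) \<Rightarrow> ('x \<Rightarrow> 'u \<Rightarrow> ennreal) \<Rightarrow> bool" where
  "standing_assm f U g \<longleftrightarrow> (\<forall>x. U x \<noteq> {}) \<and>
     (\<forall>(J::'x \<Rightarrow> ennreal) x. \<exists>u\<in>U x. g x u + J (f x u) = (INF v\<in>U x. g x v + J (f x v)))"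

text \<open>Rollout DP recursion: J_0 = Jbar, J_{k+1}(x) = min_{u in U(x)} (g(x,u) + J_k(f(x,u))).
  (The minimum is the infimum, attained under the standing assumption.)\<close>
fun rolloutJ :: "('x \<Rightarrow> 'u \<Rightarrow> 'x) \<Rightarrow> ('x \<Rightarrow> 'u set) \<Rightarrow> ('x \<Rightarrow> 'u \<Rightarrow> ennreal) \<Rightarrow> ('x \<Rightarrow> ennreal) \<Rightarrow> nat \<Rightarrow> 'x \<Rightarrow> ennreal" where
  "rolloutJ f U g Jbar 0 = Jbar"
| "rolloutJ f U g Jbar (Suc k) = (\<lambda>x. INF u\<in>U x. g x u + rolloutJ f U g Jbar k (f x u))"

definition is_rollout_policy :: "('x \<Rightarrow> 'u \<Rightarrow> 'x) \<Rightarrow> ('x \<Rightarrow> 'u set) \<Rightarrow> ('x \<Rightarrow> 'u \<Rightarrow> ennreal) \<Rightarrow> ('x \<Rightarrow> ennreal) \<Rightarrow> nat \<Rightarrow> ('x \<Rightarrow> 'u) \<Rightarrow> bool" where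
  "is_rollout_policy f U g Jbar l \<mu> \<longleftrightarrow> (\<forall>x. \<mu> x \<in> U x \<and>
     (\<forall>u\<in>U x. g x (\<mu> x) + rolloutJ f U g Jbar (l - 1) (f x (\<mu> x))
               \<le> g x u + rolloutJ f U g Jbar (l - 1) (f x u)))"

definition JbarS :: "('x \<Rightarrow> 'u \<Rightarrow> 'x) \<Rightarrow> ('x \<Rightarrow> 'u \<Rightarrow> ennreal) \<Rightarrow> 'i set \<Rightarrow> ('i \<Rightarrow> 'x \<Rightarrow> 'u) \<Rightarrow> ('i \<Rightarrow> 'x set) \<Rightarrow> 'x \<Rightarrow> ennreal" where
  "JbarS f g I \<mu>s S x = (INF i\<in>{i\<in>I. x \<in> S i}. Jpol f g (\<mu>s i) x)"

end

theory Submission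
  imports Defs
begin

text \<open>The terminal cost \<open>J\<^sub>S\<close> is excessive: one Bellman step does not increase it, because
  following \<open>\<mu>\<^sup>i\<close> keeps the state in \<open>S\<^sup>i\<close>. Bellman steps are monotone, so the rollout iterates
  \<open>J\<^sub>k\<close> decrease in \<open>k\<close>, giving \<open>J\<^sub>\<ell> \<le> J\<^sub>S\<close>. For the rollout policy \<open>\<mu>\<close>,
  \<open>T\<^sub>\<mu> J\<^sub>\<ell>\<^sub>-\<^sub>1 = J\<^sub>\<ell> \<le> J\<^sub>\<ell>\<^sub>-\<^sub>1\<close>, so \<open>J\<^sub>\<ell>\<^sub>-\<^sub>1\<close> is excessive for \<open>T\<^sub>\<mu>\<close>
  and hence dominates \<open>J\<^sub>\<mu>\<close>; one more application of \<open>T\<^sub>\<mu>\<close> gives \<open>J\<^sub>\<mu> \<le> J\<^sub>\<ell>\<close>.\<close>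

lemma traj_Suc: "traj f \<mu> x (Suc k) = traj f \<mu> (f x (\<mu> x)) k"
  unfolding traj_def by (simp only: funpow_Suc_right comp_apply)

lemma traj_Suc': "traj f \<mu> x (Suc k) = f (traj f \<mu> x k) (\<mu> (traj f \<mu> x k))"
  unfolding traj_def by simp

lemma Jpol_unfold: "Jpol f g \<mu> x = g x (\<mu> x) + Jpol f g \<mu> (f x (\<mu> x))"
proof -
  let ?h = "\<lambda>k. g (traj f \<mu> x k) (\<mu> (traj f \<mu> x k))"
  have "(\<lambda>n. ?h (Suc n)) sums Jpol f g \<mu> (f x (\<mu> x))"
    unfolding Jpol_def traj_Suc by (rule summable_sums[OF summableI])
  then have "?h sums (Jpol f g \<mu> (f x (\<mu> x)) + ?h 0)" by (rule sums_Suc)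
  then have "Jpol f g \<mu> x = Jpol f g \<mu> (f x (\<mu> x)) + ?h 0"
    unfolding Jpol_def by (rule sums_unique[symmetric])
  then show ?thesis by (simp add: traj_def add.commute)
qed

lemma Jpol_le_excessive:
  assumes excessive: "\<And>x. g x (\<mu> x) + J (f x (\<mu> x)) \<le> J x"
  shows "Jpol f g \<mu> x \<le> J x"
proof -
  let ?t = "traj f \<mu> x"
  have partial: "(\<Sum>k<n. g (?t k) (\<mu> (?t k))) + J (?t n) \<le> J x" for n
  proof (induction n)
    case 0 then show ?case by (simp add: traj_def)
  next
    case (Suc n)
    have "(\<Sum>k<Suc n. g (?t k) (\<mu> (?t k))) + J (?t (Suc n))
        = (\<Sum>k<n. g (?t k) (\<mu> (?t k))) + (g (?t n) (\<mu> (?t n)) + J (f (?t n) (\<mu> (?t n))))"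
      by (simp add: traj_Suc' add.assoc)
    also have "\<dots> \<le> (\<Sum>k<n. g (?t k) (\<mu> (?t k))) + J (?t n)"
      by (rule add_left_mono[OF excessive])
    finally show ?case using Suc order_trans by blast
  qed
  show ?thesis
    unfolding Jpol_def
  proof (rule suminf_le_const[OF summableI])
    fix n
    have "(\<Sum>k<n. g (?t k) (\<mu> (?t k))) \<le> (\<Sum>k<n. g (?t k) (\<mu> (?t k))) + J (?t n)" by simp
    then show "(\<Sum>k<n. g (?t k) (\<mu> (?t k))) \<le> J x" using partial order_trans by blast
  qed
qed

lemma rolloutJ_Suc_le:
  assumes "\<And>x. rolloutJ f U g Jbar 1 x \<le> Jbar x"
  shows "rolloutJ f U g Jbar (Suc k) x \<le> rolloutJ f U g Jbar k x"
proof (induction k arbitrary: x)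
  case 0 then show ?case using assms by simp
next
  case (Suc k)
  have "(INF u\<in>U x. g x u + rolloutJ f U g Jbar (Suc k) (f x u))
      \<le> (INF u\<in>U x. g x u + rolloutJ f U g Jbar k (f x u))"
    by (rule INF_mono) (use Suc in \<open>auto intro: add_left_mono\<close>)
  then show ?case by simp
qed

lemma rolloutJ_le_terminal:
  assumes "\<And>x. rolloutJ f U g Jbar 1 x \<le> Jbar x"
  shows "rolloutJ f U g Jbar k x \<le> Jbar x"
proof (induction k arbitrary: x)
  case 0 then show ?case by simp
next
  case (Suc k) then show ?case using rolloutJ_Suc_le[OF assms] order_trans by blast
qed

lemma JbarS_le_Jpol:
  assumes "i \<in> I" "x \<in> S i"
  shows "JbarS f g I \<mu>s S x \<le> Jpol f g (\<mu>s i) x"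
  unfolding JbarS_def by (rule INF_lower) (use assms in auto)

lemma rolloutJ_one_le_JbarS:
  assumes pol: "\<And>i. i \<in> I \<Longrightarrow> is_policy U (\<mu>s i)"
    and inv: "\<And>i x. i \<in> I \<Longrightarrow> x \<in> S i \<Longrightarrow> f x (\<mu>s i x) \<in> S i"
  shows "rolloutJ f U g (JbarS f g I \<mu>s S) 1 x \<le> JbarS f g I \<mu>s S x"
proof -
  let ?Jb = "JbarS f g I \<mu>s S"
  have "rolloutJ f U g ?Jb 1 x \<le> Jpol f g (\<mu>s i) x" if i: "i \<in> I" "x \<in> S i" for i
  proof -
    have "\<mu>s i x \<in> U x" using pol[OF i(1)] by (simp add: is_policy_def)
    then have "rolloutJ f U g ?Jb 1 x \<le> g x (\<mu>s i x) + ?Jb (f x (\<mu>s i x))"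
      by (simp add: INF_lower2)
    also have "\<dots> \<le> g x (\<mu>s i x) + Jpol f g (\<mu>s i) (f x (\<mu>s i x))"
      using i inv by (intro add_left_mono JbarS_le_Jpol)
    also have "\<dots> = Jpol f g (\<mu>s i) x" by (rule Jpol_unfold[symmetric])
    finally show ?thesis .
  qed
  then show ?thesis unfolding JbarS_def by (intro INF_greatest) auto
qed

lemma rolloutJ_rollout_policy:
  assumes "is_rollout_policy f U g Jbar (Suc m) \<mu>"
  shows "rolloutJ f U g Jbar (Suc m) x = g x (\<mu> x) + rolloutJ f U g Jbar m (f x (\<mu> x))"
proof -
  have "\<mu> x \<in> U x"
    and "\<And>u. u \<in> U x \<Longrightarrow>
           g x (\<mu> x) + rolloutJ f U g Jbar m (f x (\<mu> x)) \<le> g x u + rolloutJ f U g Jbar m (f x u)"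
    using assms unfolding is_rollout_policy_def by auto
  then show ?thesis by (auto intro: antisym INF_greatest INF_lower2[of "\<mu> x"])
qed

theorem proposition4:
  fixes f :: "'x \<Rightarrow> 'u \<Rightarrow> 'x" and U :: "'x \<Rightarrow> 'u set" and g :: "'x \<Rightarrow> 'u \<Rightarrow> ennreal"
    and I :: "'i set" and \<mu>s :: "'i \<Rightarrow> 'x \<Rightarrow> 'u" and S :: "'i \<Rightarrow> 'x set"
    and l :: nat and \<mu>t :: "'x \<Rightarrow> 'u"
  assumes standing: "standing_assm f U g"
    and I_ne: "I \<noteq> {}"
    and pol: "\<And>i. i \<in> I \<Longrightarrow> is_policy U (\<mu>s i)"
    and inv: "\<And>i x. i \<in> I \<Longrightarrow> x \<in> S i \<Longrightarrow> f x (\<mu>s i x) \<in> S i"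
    and l: "l \<ge> 1"
    and roll: "is_rollout_policy f U g (JbarS f g I \<mu>s S) l \<mu>t"
  shows "\<forall>x. Jpol f g \<mu>t x \<le> rolloutJ f U g (JbarS f g I \<mu>s S) l x
           \<and> rolloutJ f U g (JbarS f g I \<mu>s S) l x \<le> JbarS f g I \<mu>s S x"
proof -
  let ?R = "rolloutJ f U g (JbarS f g I \<mu>s S)"
  obtain m where lm: "l = Suc m" using l by (cases l) auto
  have excessive: "?R 1 x \<le> JbarS f g I \<mu>s S x" for x
    using pol inv by (rule rolloutJ_one_le_JbarS)
  have step: "?R l x = g x (\<mu>t x) + ?R m (f x (\<mu>t x))" for x
    using rolloutJ_rollout_policy[of f U g _ m \<mu>t] roll unfolding lm by blast
  have "g x (\<mu>t x) + ?R m (f x (\<mu>t x)) \<le> ?R m x" for x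
    using step rolloutJ_Suc_le[OF excessive] lm by metis
  then have "Jpol f g \<mu>t x \<le> ?R m x" for x by (rule Jpol_le_excessive)
  then have "Jpol f g \<mu>t x \<le> ?R l x" for x
    unfolding Jpol_unfold[of f g \<mu>t x] step by (rule add_left_mono)
  then show ?thesis using rolloutJ_le_terminal[OF excessive] by blast
qed

end
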